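(* Let $L$ be a distributive lattice and $\mathbf x,\mathbf y\in L^n$. Then $\mathbf x$ and $\mathbf y$ are g-comonotone if and only if $\bigwedge_{i\in I}(x_i\vee y_i)=\bigwedge_{i\in I}x_i\vee\bigwedge_{i\in I}y_i$ for every non-empty subset $I\subseteq\{1,\dots,n\}$. Similarly, $\mathbf x$ and $\mathbf y$ are dually g-comonotone if and only if $\bigvee_{i\in I}(x_i\wedge y_i)=\bigvee_{i\in I}x_i\wedge\bigvee_{i\in I}y_i$ for every non-empty subset $I\subseteq\{1,\dots,n\}$.
   Context: $\mathbf x,\mathbf y\in L^n$ are g-comonotone if for every pair $i,j\in\{1,\dots,n\}$: $(x_i\vee y_i)\wedge(x_j\vee y_j)=(x_i\wedge x_j)\vee(y_i\wedge y_j)$; dually g-comonotone if for every pair $i,j$: $(x_i\wedge y_i)\vee(x_j\wedge y_j)=(x_i\vee x_j)\wedge(y_i\vee y_j)$. *)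

theory Defs
  imports Main
begin

text \<open>Vectors in L^n are represented as functions nat => 'a, indexed by {1..n}.\<close>

definition g_comonotone :: "nat \<Rightarrow> (nat \<Rightarrow> 'a::distrib_lattice) \<Rightarrow> (nat \<Rightarrow> 'a) \<Rightarrow> bool" where
  "g_comonotone n x y \<longleftrightarrow>
     (\<forall>i\<in>{1..n}. \<forall>j\<in>{1..n}.
        inf (sup (x i) (y i)) (sup (x j) (y j)) = sup (inf (x i) (x j)) (inf (y i) (y j)))"

definition dually_g_comonotone :: "nat \<Rightarrow> (nat \<Rightarrow> 'a::distrib_lattice) \<Rightarrow> (nat \<Rightarrow> 'a) \<Rightarrow> bool" where
  "dually_g_comonotone n x y \<longleftrightarrow>
     (\<forall>i\<in>{1..n}. \<forall>j\<in>{1..n}.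
        sup (inf (x i) (y i)) (inf (x j) (y j)) = inf (sup (x i) (x j)) (sup (y i) (y j)))"

end

theory Submission imports Defs begin

text \<open>Distributivity turns \<open>\<Sqinter>x\<^sub>I \<squnion> \<Sqinter>y\<^sub>I\<close> into the meet of all \<open>x\<^sub>j \<squnion> y\<^sub>k\<close> with
  \<open>j, k \<in> I\<close>, and the pairwise condition for \<open>j, k\<close> gives
  \<open>\<Sqinter>(x\<^sub>I \<squnion> y\<^sub>I) \<le> (x\<^sub>j \<squnion> y\<^sub>j) \<sqinter> (x\<^sub>k \<squnion> y\<^sub>k) = (x\<^sub>j \<sqinter> x\<^sub>k) \<squnion> (y\<^sub>j \<sqinter> y\<^sub>k) \<le> x\<^sub>j \<squnion> y\<^sub>k\<close>.
  Conversely, the pairwise condition is the case \<open>I = {i, j}\<close>.\<close>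

lemma sup_Inf_fin_le_Inf_fin_sup:
  fixes x y :: "'b \<Rightarrow> 'a::lattice"
  assumes "finite I" "I \<noteq> {}"
  shows "sup (Inf_fin (x ` I)) (Inf_fin (y ` I)) \<le> Inf_fin ((\<lambda>i. sup (x i) (y i)) ` I)"
proof (rule Inf_fin.boundedI)
  fix a assume "a \<in> (\<lambda>i. sup (x i) (y i)) ` I"
  then obtain i where "i \<in> I" "a = sup (x i) (y i)"
    by blast
  then show "sup (Inf_fin (x ` I)) (Inf_fin (y ` I)) \<le> a"
    using assms by (simp only:) (intro sup_mono Inf_fin.coboundedI; simp)
qed (use assms in auto)

lemma Inf_fin_sup_le_sup_Inf_fin:
  fixes x y :: "'b \<Rightarrow> 'a::distrib_lattice"
  assumes "finite I" "I \<noteq> {}"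
    and pairwise: "\<And>j k. j \<in> I \<Longrightarrow> k \<in> I \<Longrightarrow>
      inf (sup (x j) (y j)) (sup (x k) (y k)) \<le> sup (inf (x j) (x k)) (inf (y j) (y k))"
  shows "Inf_fin ((\<lambda>i. sup (x i) (y i)) ` I) \<le> sup (Inf_fin (x ` I)) (Inf_fin (y ` I))"
proof -
  let ?A = "Inf_fin ((\<lambda>i. sup (x i) (y i)) ` I)"
  have "?A \<le> sup a b" if ab: "a \<in> x ` I" "b \<in> y ` I" for a b
  proof -
    obtain j k where jk: "j \<in> I" "k \<in> I" "a = x j" "b = y k"
      using ab by blast
    have "?A \<le> inf (sup (x j) (y j)) (sup (x k) (y k))"
      using assms jk by (intro le_infI Inf_fin.coboundedI) auto
    also have "\<dots> \<le> sup (inf (x j) (x k)) (inf (y j) (y k))"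
      using pairwise jk by blast
    also have "\<dots> \<le> sup a b"
      unfolding jk by (rule sup_mono[OF inf_le1 inf_le2])
    finally show ?thesis .
  qed
  moreover have "finite {sup a b |a b. a \<in> x ` I \<and> b \<in> y ` I}"
    using assms by (intro finite_image_set2) auto
  moreover have "{sup a b |a b. a \<in> x ` I \<and> b \<in> y ` I} \<noteq> {}"
    using assms by blast
  ultimately have "?A \<le> Inf_fin {sup a b |a b. a \<in> x ` I \<and> b \<in> y ` I}"
    by (intro Inf_fin.boundedI) blast+
  then show ?thesis
    using assms by (simp add: sup_Inf2_distrib)
qed

lemma pairwise_sup_inf_iff_Inf_fin_sup:
  fixes x y :: "'b \<Rightarrow> 'a::distrib_lattice"
  assumes "finite K"
  shows "(\<forall>i\<in>K. \<forall>j\<in>K.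
            inf (sup (x i) (y i)) (sup (x j) (y j)) = sup (inf (x i) (x j)) (inf (y i) (y j)))
    \<longleftrightarrow> (\<forall>I. I \<subseteq> K \<and> I \<noteq> {} \<longrightarrow>
            Inf_fin ((\<lambda>i. sup (x i) (y i)) ` I) = sup (Inf_fin (x ` I)) (Inf_fin (y ` I)))"
proof (intro iffI allI impI ballI)
  fix I assume pairwise: "\<forall>i\<in>K. \<forall>j\<in>K.
    inf (sup (x i) (y i)) (sup (x j) (y j)) = sup (inf (x i) (x j)) (inf (y i) (y j))"
    and I: "I \<subseteq> K \<and> I \<noteq> {}"
  then have "finite I" "I \<noteq> {}"
    using assms finite_subset by auto
  moreover have "inf (sup (x j) (y j)) (sup (x k) (y k)) \<le> sup (inf (x j) (x k)) (inf (y j) (y k))"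
    if "j \<in> I" "k \<in> I" for j k
    using pairwise I that by (metis order_refl subsetD)
  ultimately show "Inf_fin ((\<lambda>i. sup (x i) (y i)) ` I) = sup (Inf_fin (x ` I)) (Inf_fin (y ` I))"
    by (intro antisym Inf_fin_sup_le_sup_Inf_fin sup_Inf_fin_le_Inf_fin_sup)
next
  fix i j assume subsets: "\<forall>I. I \<subseteq> K \<and> I \<noteq> {} \<longrightarrow>
    Inf_fin ((\<lambda>i. sup (x i) (y i)) ` I) = sup (Inf_fin (x ` I)) (Inf_fin (y ` I))"
    and ij: "i \<in> K" "j \<in> K"
  have "Inf_fin ((\<lambda>i. sup (x i) (y i)) ` {i, j}) = sup (Inf_fin (x ` {i, j})) (Inf_fin (y ` {i, j}))"
    using subsets[rule_format, of "{i, j}"] ij by auto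
  then show "inf (sup (x i) (y i)) (sup (x j) (y j)) = sup (inf (x i) (x j)) (inf (y i) (y j))"
    by (cases "i = j") auto
qed

lemma Sup_fin_inf_le_inf_Sup_fin:
  fixes x y :: "'b \<Rightarrow> 'a::lattice"
  assumes "finite I" "I \<noteq> {}"
  shows "Sup_fin ((\<lambda>i. inf (x i) (y i)) ` I) \<le> inf (Sup_fin (x ` I)) (Sup_fin (y ` I))"
proof (rule Sup_fin.boundedI)
  fix a assume "a \<in> (\<lambda>i. inf (x i) (y i)) ` I"
  then obtain i where "i \<in> I" "a = inf (x i) (y i)"
    by blast
  then show "a \<le> inf (Sup_fin (x ` I)) (Sup_fin (y ` I))"
    using assms by (simp only:) (intro inf_mono Sup_fin.coboundedI; simp)
qed (use assms in auto)

lemma inf_Sup_fin_le_Sup_fin_inf: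
  fixes x y :: "'b \<Rightarrow> 'a::distrib_lattice"
  assumes "finite I" "I \<noteq> {}"
    and pairwise: "\<And>j k. j \<in> I \<Longrightarrow> k \<in> I \<Longrightarrow>
      inf (sup (x j) (x k)) (sup (y j) (y k)) \<le> sup (inf (x j) (y j)) (inf (x k) (y k))"
  shows "inf (Sup_fin (x ` I)) (Sup_fin (y ` I)) \<le> Sup_fin ((\<lambda>i. inf (x i) (y i)) ` I)"
proof -
  let ?A = "Sup_fin ((\<lambda>i. inf (x i) (y i)) ` I)"
  have "inf a b \<le> ?A" if ab: "a \<in> x ` I" "b \<in> y ` I" for a b
  proof -
    obtain j k where jk: "j \<in> I" "k \<in> I" "a = x j" "b = y k"
      using ab by blast
    have "inf a b \<le> inf (sup (x j) (x k)) (sup (y j) (y k))"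
      unfolding jk by (rule inf_mono[OF sup_ge1 sup_ge2])
    also have "\<dots> \<le> sup (inf (x j) (y j)) (inf (x k) (y k))"
      using pairwise jk by blast
    also have "\<dots> \<le> ?A"
      using assms jk by (intro le_supI Sup_fin.coboundedI) auto
    finally show ?thesis .
  qed
  moreover have "finite {inf a b |a b. a \<in> x ` I \<and> b \<in> y ` I}"
    using assms by (intro finite_image_set2) auto
  moreover have "{inf a b |a b. a \<in> x ` I \<and> b \<in> y ` I} \<noteq> {}"
    using assms by blast
  ultimately have "Sup_fin {inf a b |a b. a \<in> x ` I \<and> b \<in> y ` I} \<le> ?A"
    by (intro Sup_fin.boundedI) blast+
  then show ?thesis
    using assms by (simp add: inf_Sup2_distrib)
qed

lemma pairwise_inf_sup_iff_Sup_fin_inf: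
  fixes x y :: "'b \<Rightarrow> 'a::distrib_lattice"
  assumes "finite K"
  shows "(\<forall>i\<in>K. \<forall>j\<in>K.
            sup (inf (x i) (y i)) (inf (x j) (y j)) = inf (sup (x i) (x j)) (sup (y i) (y j)))
    \<longleftrightarrow> (\<forall>I. I \<subseteq> K \<and> I \<noteq> {} \<longrightarrow>
            Sup_fin ((\<lambda>i. inf (x i) (y i)) ` I) = inf (Sup_fin (x ` I)) (Sup_fin (y ` I)))"
proof (intro iffI allI impI ballI)
  fix I assume pairwise: "\<forall>i\<in>K. \<forall>j\<in>K.
    sup (inf (x i) (y i)) (inf (x j) (y j)) = inf (sup (x i) (x j)) (sup (y i) (y j))"
    and I: "I \<subseteq> K \<and> I \<noteq> {}"
  then have "finite I" "I \<noteq> {}"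
    using assms finite_subset by auto
  moreover have "inf (sup (x j) (x k)) (sup (y j) (y k)) \<le> sup (inf (x j) (y j)) (inf (x k) (y k))"
    if "j \<in> I" "k \<in> I" for j k
    using pairwise I that by (metis order_refl subsetD)
  ultimately show "Sup_fin ((\<lambda>i. inf (x i) (y i)) ` I) = inf (Sup_fin (x ` I)) (Sup_fin (y ` I))"
    by (intro antisym Sup_fin_inf_le_inf_Sup_fin inf_Sup_fin_le_Sup_fin_inf)
next
  fix i j assume subsets: "\<forall>I. I \<subseteq> K \<and> I \<noteq> {} \<longrightarrow>
    Sup_fin ((\<lambda>i. inf (x i) (y i)) ` I) = inf (Sup_fin (x ` I)) (Sup_fin (y ` I))"
    and ij: "i \<in> K" "j \<in> K"
  have "Sup_fin ((\<lambda>i. inf (x i) (y i)) ` {i, j}) = inf (Sup_fin (x ` {i, j})) (Sup_fin (y ` {i, j}))"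
    using subsets[rule_format, of "{i, j}"] ij by auto
  then show "sup (inf (x i) (y i)) (inf (x j) (y j)) = inf (sup (x i) (x j)) (sup (y i) (y j))"
    by (cases "i = j") auto
qed

theorem lemma2:
  fixes n :: nat and x y :: "nat \<Rightarrow> 'a::distrib_lattice"
  shows "(g_comonotone n x y \<longleftrightarrow>
           (\<forall>I. I \<subseteq> {1..n} \<and> I \<noteq> {} \<longrightarrow>
              Inf_fin ((\<lambda>i. sup (x i) (y i)) ` I) = sup (Inf_fin (x ` I)) (Inf_fin (y ` I))))
       \<and> (dually_g_comonotone n x y \<longleftrightarrow>
           (\<forall>I. I \<subseteq> {1..n} \<and> I \<noteq> {} \<longrightarrow>
              Sup_fin ((\<lambda>i. inf (x i) (y i)) ` I) = inf (Sup_fin (x ` I)) (Sup_fin (y ` I))))"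
  unfolding g_comonotone_def dually_g_comonotone_def
  by (intro conjI pairwise_sup_inf_iff_Inf_fin_sup pairwise_inf_sup_iff_Sup_fin_inf
      finite_atLeastAtMost)

end
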